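(* Let $\mathrm{dot}(\mathbf{x},\mathbf{y})=\langle\mathbf{x},\mathbf{y}\rangle$ for $\mathbf{x},\mathbf{y}\in\mathbb{R}^n$, with graph $\{(\mathbf{x},\mathbf{y},\langle\mathbf{x},\mathbf{y}\rangle)\}\subseteq\mathbb{R}^n\times\mathbb{R}^n\times\mathbb{R}$. Let $(\mathbf{x}_0,\mathbf{y}_0,z_0)\in\mathbb{R}^n\times\mathbb{R}^n\times\mathbb{R}$ with $\mathbf{x}_0\ne\mathbf{y}_0$ and $\mathbf{x}_0\ne-\mathbf{y}_0$, and put $p=\langle\mathbf{x}_0,\mathbf{y}_0\rangle$, $q=\|\mathbf{x}_0\|^2+\|\mathbf{y}_0\|^2$. Then the function $f(\lambda)=\frac{(1+\lambda^2)p+\lambda q}{(1-\lambda^2)^2}-z_0+\lambda$ has a unique root $\lambda$ in $(-1,1)$, the Euclidean projection of $(\mathbf{x}_0,\mathbf{y}_0,z_0)$ onto the graph of $\mathrm{dot}$ is unique, and it equals $(\mathbf{x}(\lambda),\mathbf{y}(\lambda),z_0-\lambda)$ where $\mathbf{x}(\lambda)=\frac{\mathbf{x}_0+\lambda\mathbf{y}_0}{1-\lambda^2}$ and $\mathbf{y}(\lambda)=\frac{\mathbf{y}_0+\lambda\mathbf{x}_0}{1-\lambda^2}$. *)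

theory Defs
  imports "HOL-Analysis.Analysis"
begin

text \<open>Graph of the bilinear map dot(x,y) = <x,y> on R^n x R^n, as a subset of R^n x R^n x R.
  The product type carries the Euclidean distance.\<close>
definition dot_graph :: "((real^'n) \<times> (real^'n) \<times> real) set" where
  "dot_graph = {(x, y, z). z = x \<bullet> y}"

definition proj_set :: "'a::metric_space set \<Rightarrow> 'a \<Rightarrow> 'a set" where
  "proj_set S p = {s \<in> S. \<forall>t\<in>S. dist p s \<le> dist p t}"

end

theory Submission
  imports Defs "HOL-Real_Asymp.Real_Asymp"
begin

text \<open>The Lagrange condition for the projection (x, y, z) of (x0, y0, z0) onto the graph reads
  x0 = x - l y, y0 = y - l x, z0 = x \<bullet> y + l, where l is the multiplier; for |l| < 1 it can be
  solved for x and y. Conversely, from such a point the squared distance to any (u, v, u \<bullet> v)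
  exceeds the squared distance to (x, y, x \<bullet> y) by a sum of squares weighted by 1 and 1 - l^2,
  which vanishes only at u = x, v = y. After the partial fraction decomposition
  f l = |x0 + y0|^2 / (4 (1 - l)^2) - |x0 - y0|^2 / (4 (1 + l)^2) - z0 + l,
  the hypotheses x0 \<noteq> \<plusminus>y0 make f strictly increasing from -\<infinity> to +\<infinity> on (-1, 1).\<close>

lemma strict_mono_on_unique_zero:
  fixes g :: "real \<Rightarrow> real"
  assumes "a < b"
    and cont: "continuous_on {a<..<b} g" and mono: "strict_mono_on {a<..<b} g"
    and bot: "filterlim g at_bot (at_right a)" and top: "filterlim g at_top (at_left b)"
  shows "\<exists>!x. x \<in> {a<..<b} \<and> g x = 0"
proof -
  have "eventually (\<lambda>x. x \<in> {a<..<b} \<and> g x < 0) (at_right a)"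
    using eventually_conj[OF eventually_at_right_real[OF \<open>a < b\<close>]
        bot[unfolded filterlim_at_bot_dense, rule_format, of 0]] by simp
  then obtain u where u: "u \<in> {a<..<b}" "g u < 0"
    using eventually_happens'[OF trivial_limit_at_right_real] by blast
  have "eventually (\<lambda>x. x \<in> {a<..<b} \<and> g x > 0) (at_left b)"
    using eventually_conj[OF eventually_at_left_real[OF \<open>a < b\<close>]
        top[unfolded filterlim_at_top_dense, rule_format, of 0]] by simp
  then obtain v where v: "v \<in> {a<..<b}" "g v > 0"
    using eventually_happens'[OF trivial_limit_at_left_real] by blast
  have "u < v"
    using strict_mono_onD[OF mono v(1) u(1)] u v by (cases "v < u") (auto simp: not_less le_less)
  moreover have "continuous_on {u..v} g"
    using u v by (intro continuous_on_subset[OF cont]) auto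
  ultimately obtain x where "u \<le> x" "x \<le> v" "g x = 0"
    using IVT'[of g u 0 v] u v by auto
  with u v have "x \<in> {a<..<b} \<and> g x = 0" by auto
  moreover have "y = x" if "y \<in> {a<..<b}" "g y = 0" for y
    using inj_onD[OF strict_mono_on_imp_inj_on[OF mono]] that \<open>x \<in> {a<..<b} \<and> g x = 0\<close>
    by force
  ultimately show ?thesis by blast
qed

lemma unique_zero_unit_interval:
  fixes A B c :: real
  assumes "A > 0" "B > 0"
  shows "\<exists>!l. l \<in> {-1<..<1} \<and> A / (1 - l)^2 - B / (1 + l)^2 - c + l = 0"
proof (rule strict_mono_on_unique_zero)
  show "continuous_on {-1<..<1} (\<lambda>l. A / (1 - l)^2 - B / (1 + l)^2 - c + l)"
    by (intro continuous_intros) auto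
  show "strict_mono_on {-1<..<1} (\<lambda>l. A / (1 - l)^2 - B / (1 + l)^2 - c + l)"
  proof (rule strict_mono_onI)
    fix l m :: real assume "l \<in> {-1<..<1}" "m \<in> {-1<..<1}" "l < m"
    then have "A / (1 - l)^2 < A / (1 - m)^2" "B / (1 + m)^2 < B / (1 + l)^2"
      using assms by (auto intro!: divide_strict_left_mono power_strict_mono)
    with \<open>l < m\<close> show "A / (1 - l)^2 - B / (1 + l)^2 - c + l < A / (1 - m)^2 - B / (1 + m)^2 - c + m"
      by linarith
  qed
  show "filterlim (\<lambda>l. A / (1 - l)^2 - B / (1 + l)^2 - c + l) at_bot (at_right (-1))"
    using assms by real_asymp
  show "filterlim (\<lambda>l. A / (1 - l)^2 - B / (1 + l)^2 - c + l) at_top (at_left 1)"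
    using assms by real_asymp
qed simp

lemma partial_fractions_unit_interval:
  fixes p q l :: real
  assumes "l^2 \<noteq> 1"
  shows "((1 + l^2) * p + l * q) / (1 - l^2)^2
       = ((q + 2 * p) / 4) / (1 - l)^2 - ((q - 2 * p) / 4) / (1 + l)^2"
proof -
  have "1 - l \<noteq> 0" "1 + l \<noteq> 0" using assms by (auto simp: add_eq_0_iff)
  moreover have "1 - l^2 = (1 - l) * (1 + l)" by (simp add: power2_eq_square algebra_simps)
  ultimately show ?thesis
    by (simp add: divide_simps power_mult_distrib) (simp add: algebra_simps power2_eq_square)
qed

lemma norm_add_diff_squared:
  fixes x y :: "'a::real_inner"
  shows "(norm (x + y))^2 = (norm x)^2 + (norm y)^2 + 2 * (x \<bullet> y)"
    and "(norm (x - y))^2 = (norm x)^2 + (norm y)^2 - 2 * (x \<bullet> y)"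
  by (simp_all add: power2_norm_eq_inner inner_add_left inner_add_right inner_diff_left
      inner_diff_right inner_commute)

lemma lagrange_point_solution:
  fixes a b :: "'a::real_inner"
  assumes "l^2 \<noteq> 1"
  defines "x \<equiv> (1 / (1 - l^2)) *\<^sub>R (a + l *\<^sub>R b)"
      and "y \<equiv> (1 / (1 - l^2)) *\<^sub>R (b + l *\<^sub>R a)"
  shows "x - l *\<^sub>R y = a" and "y - l *\<^sub>R x = b"
    and "x \<bullet> y = ((1 + l^2) * (a \<bullet> b) + l * ((norm a)^2 + (norm b)^2)) / (1 - l^2)^2"
proof -
  have "1 - l^2 \<noteq> 0" using assms(1) by simp
  then show "x - l *\<^sub>R y = a" "y - l *\<^sub>R x = b"
    by (simp_all add: x_def y_def scaleR_add_right power2_eq_square divide_simps algebra_simps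
        flip: scaleR_diff_left)
  have "x \<bullet> y = (1 / (1 - l^2))^2 * ((1 + l^2) * (a \<bullet> b) + l * ((norm a)^2 + (norm b)^2))"
    unfolding x_def y_def power2_norm_eq_inner
    by (simp add: inner_add_left inner_add_right inner_commute algebra_simps power2_eq_square
        add_divide_distrib)
  then show "x \<bullet> y = ((1 + l^2) * (a \<bullet> b) + l * ((norm a)^2 + (norm b)^2)) / (1 - l^2)^2"
    by (simp add: power_divide)
qed

lemma dist_triple_power2:
  fixes a a' :: "'a::real_normed_vector" and b b' :: "'b::real_normed_vector" and c c' :: real
  shows "(dist (a, b, c) (a', b', c'))^2 = (norm (a' - a))^2 + (norm (b' - b))^2 + (c' - c)^2"
  by (simp add: dist_norm norm_Pair norm_minus_commute power2_commute)

lemma dot_graph_distance_excess: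
  fixes x y u v :: "'a::real_inner"
  shows "(norm (u - (x - l *\<^sub>R y)))^2 + (norm (v - (y - l *\<^sub>R x)))^2 + (u \<bullet> v - (x \<bullet> y + l))^2
       = l^2 * ((norm x)^2 + (norm y)^2 + 1) + (norm ((u - x) - l *\<^sub>R (v - y)))^2
         + (1 - l^2) * (norm (v - y))^2 + (u \<bullet> v - x \<bullet> y)^2"
  unfolding power2_norm_eq_inner
  by (simp add: inner_add_left inner_add_right inner_diff_left inner_diff_right inner_commute
      algebra_simps power2_eq_square)

lemma proj_set_dot_graph:
  fixes x y :: "real^'n"
  assumes "\<bar>l\<bar> < 1"
  shows "proj_set dot_graph (x - l *\<^sub>R y, y - l *\<^sub>R x, x \<bullet> y + l) = {(x, y, x \<bullet> y)}"
proof -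
  define P where "P = (x - l *\<^sub>R y, y - l *\<^sub>R x, x \<bullet> y + l)"
  define excess where "excess u v =
    (norm ((u - x) - l *\<^sub>R (v - y)))^2 + (1 - l^2) * (norm (v - y))^2 + (u \<bullet> v - x \<bullet> y)^2"
    for u v :: "real^'n"
  have "l^2 < 1"
    using assms by (simp add: abs_square_less_1)
  then have excess_nonneg: "excess u v \<ge> 0" for u v
    unfolding excess_def by simp
  have excess_zero: "u = x \<and> v = y" if "excess u v = 0" for u v
  proof -
    have "(1 - l^2) * (norm (v - y))^2 = 0" "(norm ((u - x) - l *\<^sub>R (v - y)))^2 = 0"
      using that \<open>l^2 < 1\<close> unfolding excess_def
      by (smt (verit) zero_le_power2 mult_nonneg_nonneg)+
    with \<open>l^2 < 1\<close> show ?thesis by simp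
  qed
  have dist_graph_excess:
    "(dist P (u, v, u \<bullet> v))^2 = l^2 * ((norm x)^2 + (norm y)^2 + 1) + excess u v" for u v
    unfolding P_def dist_triple_power2 dot_graph_distance_excess excess_def by (simp only: add.assoc)
  have dist_graph: "(dist P (u, v, u \<bullet> v))^2 = (dist P (x, y, x \<bullet> y))^2 + excess u v" for u v
    using dist_graph_excess[of u v] dist_graph_excess[of x y] by (simp add: excess_def)
  have nearest: "dist P (x, y, x \<bullet> y) \<le> dist P (u, v, u \<bullet> v)" for u v
  proof (rule power2_le_imp_le)
    show "(dist P (x, y, x \<bullet> y))^2 \<le> (dist P (u, v, u \<bullet> v))^2"
      using dist_graph[of u v] excess_nonneg[of u v] by linarith
  qed simp
  have "s = (x, y, x \<bullet> y)" if "s \<in> proj_set dot_graph P" for s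
  proof -
    have "s \<in> dot_graph"
      using that by (simp add: proj_set_def)
    then obtain u v where s: "s = (u, v, u \<bullet> v)"
      by (cases s) (auto simp: dot_graph_def)
    have "dist P s \<le> dist P (x, y, x \<bullet> y)"
      using that by (auto simp: proj_set_def dot_graph_def)
    then have "(dist P (u, v, u \<bullet> v))^2 \<le> (dist P (x, y, x \<bullet> y))^2"
      unfolding s by (simp add: power_mono)
    then have "excess u v = 0"
      using dist_graph[of u v] excess_nonneg[of u v] by linarith
    with s excess_zero show ?thesis by simp
  qed
  moreover have "(x, y, x \<bullet> y) \<in> proj_set dot_graph P"
    using nearest by (auto simp: proj_set_def dot_graph_def)
  ultimately show ?thesis
    unfolding P_def by blast
qed

theorem mainTheorem6:
  fixes x0 y0 :: "real^'n" and z0 :: real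
  assumes "x0 \<noteq> y0" and "x0 \<noteq> - y0"
  defines "p \<equiv> x0 \<bullet> y0"
      and "q \<equiv> (norm x0)^2 + (norm y0)^2"
  defines "f \<equiv> (\<lambda>l::real. ((1 + l^2) * p + l * q) / (1 - l^2)^2 - z0 + l)"
  shows "(\<exists>!l. l \<in> {-1<..<1} \<and> f l = 0)
       \<and> (\<forall>l. l \<in> {-1<..<1} \<and> f l = 0 \<longrightarrow>
            proj_set dot_graph (x0, y0, z0) =
              {((1 / (1 - l^2)) *\<^sub>R (x0 + l *\<^sub>R y0),
                (1 / (1 - l^2)) *\<^sub>R (y0 + l *\<^sub>R x0),
                z0 - l)})"
proof (intro conjI allI impI)
  have f_eq: "f l = (norm (x0 + y0))^2 / 4 / (1 - l)^2 - (norm (x0 - y0))^2 / 4 / (1 + l)^2 - z0 + l"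
    if "l \<in> {-1<..<1}" for l
    using that unfolding f_def norm_add_diff_squared p_def[symmetric] q_def[symmetric]
    by (simp add: partial_fractions_unit_interval power2_eq_1_iff)
  have "(norm (x0 + y0))^2 / 4 > 0" "(norm (x0 - y0))^2 / 4 > 0"
    using assms(1,2) by (auto simp: add_eq_0_iff2)
  from unique_zero_unit_interval[OF this, of z0]
  show "\<exists>!l. l \<in> {-1<..<1} \<and> f l = 0"
    using f_eq by (metis (no_types, lifting))
next
  fix l assume l: "l \<in> {-1<..<1} \<and> f l = 0"
  define x where "x = (1 / (1 - l^2)) *\<^sub>R (x0 + l *\<^sub>R y0)"
  define y where "y = (1 / (1 - l^2)) *\<^sub>R (y0 + l *\<^sub>R x0)"
  have "l^2 \<noteq> 1" using l by (auto simp: power2_eq_1_iff)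
  note solution = lagrange_point_solution[OF this, where a = x0 and b = y0, folded x_def y_def]
  have "z0 = x \<bullet> y + l" using l solution(3) by (simp add: f_def p_def q_def)
  then have "(x0, y0, z0) = (x - l *\<^sub>R y, y - l *\<^sub>R x, x \<bullet> y + l)"
    using solution(1,2) by metis
  then show "proj_set dot_graph (x0, y0, z0) = {(x, y, z0 - l)}"
    using proj_set_dot_graph[of l x y] l \<open>z0 = x \<bullet> y + l\<close> by (simp add: abs_less_iff)
qed

end
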